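(* Let $\mathcal{A}$ be a finite abelian group with $|\mathcal{A}|\ge 3$. Let $M_{10}(p_1,p_2)$ be the graph consisting of the $4$-cycle $v_1v_2v_3v_4v_1$ and the triangle $v_1v_5v_6$ (sharing the vertex $v_1$), together with $p_1\ge0$ pendant vertices adjacent to $v_1$ and $p_2\ge 0$ pendant vertices adjacent to $v_2$. Then $M_{10}(p_1,p_2)$ is $\mathcal{A}$-vertex magic if and only if $p_1=p_2=0$ and $|\mathcal{A}|$ is even.
   Context: A map $\ell:V(G)\to\mathcal{A}\setminus\{0\}$ is an $\mathcal{A}$-vertex magic labeling if there is $\mu\in\mathcal{A}$ with $\sum_{u\in N(v)}\ell(u)=\mu$ for every vertex $v$; $G$ is $\mathcal{A}$-vertex magic if such a labeling exists. A pendant vertex has degree $1$. *)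

theory Defs
  imports Main
begin

text \<open>A simple graph is given by a vertex set and a symmetric irreflexive
adjacency relation; the open neighbourhood of v is the set of adjacent vertices.\<close>

definition nbhd :: "'v set \<Rightarrow> ('v \<Rightarrow> 'v \<Rightarrow> bool) \<Rightarrow> 'v \<Rightarrow> 'v set" where
  "nbhd V adj v = {u \<in> V. adj v u}"

definition vertex_magic_labeling ::
  "'v set \<Rightarrow> ('v \<Rightarrow> 'v \<Rightarrow> bool) \<Rightarrow> ('v \<Rightarrow> 'a::ab_group_add) \<Rightarrow> bool" where
  "vertex_magic_labeling V adj l \<longleftrightarrow>
     (\<forall>v\<in>V. l v \<noteq> 0) \<and> (\<exists>\<mu>. \<forall>v\<in>V. (\<Sum>u\<in>nbhd V adj v. l u) = \<mu>)"

text \<open>Vertices of M10(p1,p2): core vertices C 1..C 6, pendants P1 k (k<p1) at C 1,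
  pendants P2 k (k<p2) at C 2.\<close>
datatype m10v = C nat | P1 nat | P2 nat

definition M10_verts :: "nat \<Rightarrow> nat \<Rightarrow> m10v set" where
  "M10_verts p1 p2 = C ` {1..6} \<union> P1 ` {..<p1} \<union> P2 ` {..<p2}"

fun M10_base_edge :: "m10v \<Rightarrow> m10v \<Rightarrow> bool" where
  "M10_base_edge (C i) (C j) \<longleftrightarrow>
     (i, j) \<in> {(1,2),(2,3),(3,4),(4,1),(1,5),(5,6),(6,1)}"
| "M10_base_edge (C i) (P1 k) \<longleftrightarrow> i = 1"
| "M10_base_edge (C i) (P2 k) \<longleftrightarrow> i = 2"
| "M10_base_edge _ _ \<longleftrightarrow> False"

definition M10_adj :: "m10v \<Rightarrow> m10v \<Rightarrow> bool" where
  "M10_adj u v \<longleftrightarrow> M10_base_edge u v \<or> M10_base_edge v u"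

end

(*
  Let l be magic with constant \<mu>. The triangle vertices v5, v6 both see v1 and each other, so
  l(v5) = l(v6); the 4-cycle vertex v3 gives l(v2) + l(v4) = \<mu>. A pendant at v1 (resp. v2)
  would force l(v1) = \<mu> (resp. l(v2) = \<mu>), making l(v5) (resp. l(v4)) zero. Without pendants,
  the sum at v1 is \<mu> + 2 l(v5), so l(v5) is an element of order 2, which exists exactly when
  |A| is even. Conversely, every neighbourhood of M10(0,0) has even size, so the constant
  labeling by an element of order 2 is magic with \<mu> = 0.
*)
theory Submission
  imports Defs "HOL-Library.Disjoint_Sets" "HOL-Library.Z2"
begin

lemma even_card_if_fixpoint_free_involution:
  assumes "\<And>x. x \<in> X \<Longrightarrow> h x \<in> X" "\<And>x. x \<in> X \<Longrightarrow> h (h x) = x"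
    and "\<And>x. x \<in> X \<Longrightarrow> h x \<noteq> x"
  shows "even (card X)"
proof -
  \<comment> \<open>Count modulo 2: each orbit \<open>{x, h x}\<close> contributes \<open>1 + 1 = 0\<close>.\<close>
  have "(of_nat (card X) :: bit) = (\<Sum>x\<in>X. 1)"
    by simp
  also have "\<dots> = 0"
    by (rule sum_involution_eq_0[where h = h]) (use assms in auto)
  finally show ?thesis
    by (metis even_of_nat_iff even_zero)
qed

lemma even_card_UNIV_iff_exists_order_two:
  "even (card (UNIV :: 'a::{ab_group_add, finite} set)) \<longleftrightarrow> (\<exists>g::'a. g \<noteq> 0 \<and> g + g = 0)"
proof
  assume even: "even (card (UNIV :: 'a set))"
  show "\<exists>g::'a. g \<noteq> 0 \<and> g + g = 0"
  proof (rule ccontr)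
    assume "\<nexists>g::'a. g \<noteq> 0 \<and> g + g = 0"
    then have "even (card (UNIV - {0::'a}))"
      by (intro even_card_if_fixpoint_free_involution[where h = uminus])
        (auto simp: neg_eq_iff_add_eq_0)
    then show False
      using even by (simp add: card_Diff_singleton)
  qed
next
  assume "\<exists>g::'a. g \<noteq> 0 \<and> g + g = 0"
  then obtain g :: 'a where "g \<noteq> 0" "g + g = 0"
    by blast
  then show "even (card (UNIV :: 'a set))"
    by (intro even_card_if_fixpoint_free_involution[where h = "\<lambda>x. x + g"])
      (simp_all add: add.assoc)
qed

lemma sum_const_order_two:
  fixes g :: "'a::ab_group_add"
  assumes "g + g = 0"
  shows "(\<Sum>x\<in>A. g) = (if even (card A) then 0 else g)"
proof (induction A rule: infinite_finite_induct)
  case (insert x A)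
  then show ?case
    using assms by (auto simp: eq_neg_iff_add_eq_0)
qed simp_all

lemma M10_nbhd:
  "nbhd (M10_verts p1 p2) M10_adj (C 1) = {C 2, C 4, C 5, C 6} \<union> P1 ` {..<p1}"
  "nbhd (M10_verts p1 p2) M10_adj (C 2) = {C 1, C 3} \<union> P2 ` {..<p2}"
  "nbhd (M10_verts p1 p2) M10_adj (C 3) = {C 2, C 4}"
  "nbhd (M10_verts p1 p2) M10_adj (C 4) = {C 1, C 3}"
  "nbhd (M10_verts p1 p2) M10_adj (C 5) = {C 1, C 6}"
  "nbhd (M10_verts p1 p2) M10_adj (C 6) = {C 1, C 5}"
  "k < p1 \<Longrightarrow> nbhd (M10_verts p1 p2) M10_adj (P1 k) = {C 1}"
  "k < p2 \<Longrightarrow> nbhd (M10_verts p1 p2) M10_adj (P2 k) = {C 2}"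
  unfolding nbhd_def M10_verts_def M10_adj_def
  by (auto elim: M10_base_edge.elims)

lemma M10_verts_iff [simp]:
  "C i \<in> M10_verts p1 p2 \<longleftrightarrow> i \<in> {1..6}"
  "P1 k \<in> M10_verts p1 p2 \<longleftrightarrow> k < p1"
  "P2 k \<in> M10_verts p1 p2 \<longleftrightarrow> k < p2"
  by (auto simp: M10_verts_def)

lemma M10_verts_0_0: "M10_verts 0 0 = {C 1, C 2, C 3, C 4, C 5, C 6}"
  by (auto simp: M10_verts_def)

lemma M10_magic_necessary:
  assumes "vertex_magic_labeling (M10_verts p1 p2) M10_adj l"
  shows "p1 = 0" "p2 = 0" "l (C 5) \<noteq> 0" "l (C 5) + l (C 5) = 0"
proof -
  obtain \<mu> where nonzero: "\<And>v. v \<in> M10_verts p1 p2 \<Longrightarrow> l v \<noteq> 0"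
    and magic: "\<And>v. v \<in> M10_verts p1 p2 \<Longrightarrow> (\<Sum>u\<in>nbhd (M10_verts p1 p2) M10_adj v. l u) = \<mu>"
    using assms unfolding vertex_magic_labeling_def by blast
  have at_C3: "l (C 2) + l (C 4) = \<mu>" and at_C5: "l (C 1) + l (C 6) = \<mu>"
    and at_C6: "l (C 1) + l (C 5) = \<mu>"
    using magic[of "C 3"] magic[of "C 5"] magic[of "C 6"] by (simp_all add: M10_nbhd)
  show "l (C 5) \<noteq> 0"
    using nonzero[of "C 5"] by simp
  show "p1 = 0"
  proof (rule ccontr)
    assume "p1 \<noteq> 0"
    then have "l (C 1) = \<mu>"
      using magic[of "P1 0"] by (simp add: M10_nbhd)
    then show False
      using at_C6 \<open>l (C 5) \<noteq> 0\<close> by simp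
  qed
  show "p2 = 0"
  proof (rule ccontr)
    assume "p2 \<noteq> 0"
    then have "l (C 2) = \<mu>"
      using magic[of "P2 0"] by (simp add: M10_nbhd)
    then show False
      using at_C3 nonzero[of "C 4"] by simp
  qed
  have "l (C 2) + l (C 4) + (l (C 5) + l (C 6)) = \<mu>"
    using magic[of "C 1"] \<open>p1 = 0\<close> by (simp add: M10_nbhd add.assoc del: One_nat_def)
  moreover have "l (C 6) = l (C 5)"
    using at_C5 at_C6 by (metis add_left_cancel)
  ultimately show "l (C 5) + l (C 5) = 0"
    using at_C3 by simp
qed

lemma M10_0_0_even_degrees:
  assumes "v \<in> M10_verts 0 0"
  shows "even (card (nbhd (M10_verts 0 0) M10_adj v))"
proof -
  have "v \<in> {C 1, C 2, C 3, C 4, C 5, C 6}"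
    using assms by (simp add: M10_verts_0_0 del: One_nat_def)
  then show ?thesis
    by (auto simp: M10_nbhd simp del: One_nat_def)
qed

theorem proposition4p9:
  fixes p1 p2 :: nat
  assumes "card (UNIV :: 'a::{ab_group_add, finite} set) \<ge> 3"
  shows "(\<exists>l :: m10v \<Rightarrow> 'a. vertex_magic_labeling (M10_verts p1 p2) M10_adj l)
         \<longleftrightarrow> (p1 = 0 \<and> p2 = 0 \<and> even (card (UNIV :: 'a set)))"
proof
  assume "\<exists>l :: m10v \<Rightarrow> 'a. vertex_magic_labeling (M10_verts p1 p2) M10_adj l"
  then obtain l :: "m10v \<Rightarrow> 'a" where "vertex_magic_labeling (M10_verts p1 p2) M10_adj l"
    by blast
  from M10_magic_necessary[OF this]
  show "p1 = 0 \<and> p2 = 0 \<and> even (card (UNIV :: 'a set))"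
    unfolding even_card_UNIV_iff_exists_order_two by blast
next
  assume "p1 = 0 \<and> p2 = 0 \<and> even (card (UNIV :: 'a set))"
  then obtain g :: 'a where "p1 = 0" "p2 = 0" "g \<noteq> 0" "g + g = 0"
    unfolding even_card_UNIV_iff_exists_order_two by blast
  then have "vertex_magic_labeling (M10_verts p1 p2) M10_adj (\<lambda>_. g)"
    unfolding vertex_magic_labeling_def
    by (simp add: sum_const_order_two M10_0_0_even_degrees)
  then show "\<exists>l :: m10v \<Rightarrow> 'a. vertex_magic_labeling (M10_verts p1 p2) M10_adj l"
    by blast
qed

end
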